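(* Assume the data (A1)–(A5): an associative unital $*$-algebra $\mathcal A$ over $\mathbb C$; an $\mathcal A$-bimodule $\Omega^1$; a $\mathbb C$-linear derivation $d:\mathcal A\to\Omega^1$; a map $\omega:\Omega^1\times\overline{\Omega^1}\to\mathbb C$, linear in both slots, with $\omega(\alpha,\overline\beta)=\overline{\omega(\beta,\overline\alpha)}$, $\omega(f\alpha g,\overline\beta)=\omega(\alpha,\overline{f^*\beta g^*})$, $\omega(\alpha,\overline\alpha)>0$ for $\alpha\ne0$; and a linear $\eta:\mathcal A\to\mathbb C$ with $\eta(f^* )=-\overline{\eta(f)}$ and $\eta([f,g])=\frac{-1}{2\sqrt{-1}}\big(\omega(df,\overline{d(g^* )})-\omega(dg,\overline{d(f^* )})\big)$. Let $\overline{\Omega^1}$, $d^\dagger$, $\mathbb B$ and $\Xi'$ be as in the context. Let $P=(p_{ij})\in\mathrm{Mat}(n\times n,\mathcal A)$ with $P^2=P$, $p_{ij}^*=p_{ji}$, and let $E=\mathcal A^nP$ (row vectors) with the Hermitian form induced from $\mathsf H(\phi,\overline\psi)=\sum_i\phi_i\psi_i^*$. Let $A=A_{can}+\delta$ with $A_{can}=(2P-1)dP$, $\delta\in\mathrm{Mat}(n\times n,\Omega^1)$, $\delta=P\delta P$; it defines the connection $\nabla\phi=d\phi+\phi A$ on $E$, whose Hermitian-conjugate connection is $\nabla^\dagger\phi=d^\dagger\phi+\phi A^\dagger$ with $(A^\dagger)_{ij}:=\overline{A_{ji}}$. Let $u\in\mathrm{Mat}(n\times n,\mathcal A)$ with $u=PuP$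 and $u_{ij}^*=-u_{ji}$, acting on $E$ by $\phi\mapsto\phi u$. Let $C_3:E\to\mathbb B\otimes_{\mathcal A}\mathbb B\otimes_{\mathcal A}\mathbb B\otimes_{\mathcal A}E$ be the composition of $u$ followed by three applications of $\widetilde{\nabla\!\!\!\nabla}:E\to\mathbb B\otimes_{\mathcal A}E$, $\phi\mapsto$ the element with components $(\phi,\nabla\phi,\nabla^\dagger\phi)$; concretely, with $N\in\mathrm{Mat}(n\times n,\mathbb B)$, $N_{jk}:=(\delta_{jk},A_{jk},(A^\dagger)_{jk})$, one has $\operatorname{Trace}_E(C_3)=\big[\sum_{i,j,k,l}u_{ij}N_{jk}\otimes N_{kl}\otimes N_{li}\big]\in\#(\mathbb B\otimes_{\mathcal A}\mathbb B\otimes_{\mathcal A}\mathbb B)$. Then $$\frac{\sqrt{-1}}{2}\,\Xi'\big(\operatorname{Trace}_E(C_3)\big)=\eta(\operatorname{Trace}u)-\omega^{symp}(A,du)+\tfrac12\,\omega^{symp}(A,[A,u]),$$ where $\omega^{symp}(B,C):=\operatorname{Im}\sum_{i,j}\omega(B_{ij},\overline{C_{ij}})$, $du=(du_{ij})$, $[A,u]=Au-uA$. That is, the moment map defined via $\Xi'$ agrees with the moment map of the Hamiltonian action of unitary gauge transformations on connections on $E$.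
   Context: $\overline{\Omega^1}$ is the complex-conjugate space of $\Omega^1$, an $\mathcal A$-bimodule via $f\cdot\overline\beta\cdot g:=\overline{g^*\beta f^*}$; $d^\dagger(f):=-\overline{d(f^* )}$, applied entrywise to vectors. $\mathbb B:=\mathcal A\oplus\Omega^1\oplus\overline{\Omega^1}$ with bimodule structure $f(h,\alpha,\overline\beta)g=(fhg, f\alpha g+df\,hg, f\overline\beta g+d^\dagger f\,hg)$; in $u_{ij}N_{jk}$ the left action of $\mathcal A$ on $\mathbb B$ is used. For a bimodule $G$, $\#(G)=G/\mathrm{span}\{ag-ga\}$; for $\Phi:E\to G\otimes_{\mathcal A}E$, $\operatorname{Trace}_E(\Phi)\in\#(G)$ is the image of $\Phi$ under $\mathrm{Hom}(E,G\otimes_{\mathcal A}E)\cong E^\vee\otimes_{\mathcal A}G\otimes_{\mathcal A}E\to\#(G)$ contracting $E$ with $E^\vee=\mathrm{Hom}_{\mathcal A}(E,\mathcal A)$. $\Xi':\#(\mathbb B\otimes_{\mathcal A}\mathbb B\otimes_{\mathcal A}\mathbb B)\to\mathbb C$ is induced by the trilinear $\Xi$ given on pure tensors (writing $f,\alpha,\overline\alpha$ for elements of the three summands; unlisted type combinations map to $0$) by: $\Xi(f_1\otimes f_2\otimes f_3)=\sum_{\text{cyclic }(a,b,c)}\frac13(-2\sqrt{-1}\eta(f_af_bf_c)-\omega(df_a,d^\dagger f_b\cdot f_c)+\omega(df_b\cdot f_c,d^\dagger f_a))$; $\Xi(\alpha\otimes f\otimes g)=\Xi(g\otimes\alpha\otimes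 f)=\Xi(f\otimes g\otimes\alpha)=\omega(\alpha,d^\dagger f\cdot g)$; $\Xi(\overline\alpha\otimes f\otimes g)=\Xi(g\otimes\overline\alpha\otimes f)=\Xi(f\otimes g\otimes\overline\alpha)=-\omega(df\cdot g,\overline\alpha)$; $\Xi(\alpha\otimes\overline\beta\otimes f)=\Xi(f\otimes\alpha\otimes\overline\beta)=\Xi(\overline\beta\otimes f\otimes\alpha)=-\omega(\alpha,\overline\beta\cdot f)$; $\Xi(\overline\beta\otimes\alpha\otimes f)=\Xi(f\otimes\overline\beta\otimes\alpha)=\Xi(\alpha\otimes f\otimes\overline\beta)=\omega(\alpha\cdot f,\overline\beta)$ (this $\Xi$ is known to descend to $\#$). *)

theory Defs
  imports Complex_Main
begin

text \<open>The algebra is a type 'a of class ring_1 (associative, unital)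
with an explicit complex scalar multiplication sA and involution st.  The bimodule
Omega^1 is a type 'b with complex scalar multiplication sO, left action lm, right action rm.
The conjugate space of Omega^1 is represented by Omega^1 itself: the representative beta
stands for conj(beta).  The pairing w alpha beta stands for omega(alpha, conj(beta)).\<close>

definition star_algebra :: "(complex \<Rightarrow> 'a::ring_1 \<Rightarrow> 'a) \<Rightarrow> ('a \<Rightarrow> 'a) \<Rightarrow> bool" where
  "star_algebra sA st \<longleftrightarrow>
     (\<forall>c x y. sA c (x + y) = sA c x + sA c y) \<and>
     (\<forall>c e x. sA (c + e) x = sA c x + sA e x) \<and>
     (\<forall>c e x. sA (c * e) x = sA c (sA e x)) \<and>
     (\<forall>x. sA 1 x = x) \<and>
     (\<forall>c x y. sA c (x * y) = sA c x * y \<and> sA c (x * y) = x * sA c y) \<and>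
     (\<forall>x y. st (x + y) = st x + st y) \<and>
     (\<forall>c x. st (sA c x) = sA (cnj c) (st x)) \<and>
     (\<forall>x y. st (x * y) = st y * st x) \<and>
     (\<forall>x. st (st x) = x)"

definition bimodule ::
  "(complex \<Rightarrow> 'a::ring_1 \<Rightarrow> 'a) \<Rightarrow> (complex \<Rightarrow> 'b::ab_group_add \<Rightarrow> 'b)
   \<Rightarrow> ('a \<Rightarrow> 'b \<Rightarrow> 'b) \<Rightarrow> ('b \<Rightarrow> 'a \<Rightarrow> 'b) \<Rightarrow> bool" where
  "bimodule sA sO lm rm \<longleftrightarrow>
     (\<forall>c a b. sO c (a + b) = sO c a + sO c b) \<and>
     (\<forall>c e a. sO (c + e) a = sO c a + sO e a) \<and>
     (\<forall>c e a. sO (c * e) a = sO c (sO e a)) \<and>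
     (\<forall>a. sO 1 a = a) \<and>
     (\<forall>f g a. lm (f + g) a = lm f a + lm g a) \<and>
     (\<forall>f a b. lm f (a + b) = lm f a + lm f b) \<and>
     (\<forall>f g a. lm (f * g) a = lm f (lm g a)) \<and>
     (\<forall>a. lm 1 a = a) \<and>
     (\<forall>f g a. rm a (f + g) = rm a f + rm a g) \<and>
     (\<forall>f a b. rm (a + b) f = rm a f + rm b f) \<and>
     (\<forall>f g a. rm a (f * g) = rm (rm a f) g) \<and>
     (\<forall>a. rm a 1 = a) \<and>
     (\<forall>f g a. rm (lm f a) g = lm f (rm a g)) \<and>
     (\<forall>c f a. lm (sA c f) a = sO c (lm f a) \<and> lm f (sO c a) = sO c (lm f a)) \<and>
     (\<forall>c f a. rm a (sA c f) = sO c (rm a f) \<and> rm (sO c a) f = sO c (rm a f))"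

definition linear_derivation ::
  "(complex \<Rightarrow> 'a::ring_1 \<Rightarrow> 'a) \<Rightarrow> (complex \<Rightarrow> 'b::ab_group_add \<Rightarrow> 'b)
   \<Rightarrow> ('a \<Rightarrow> 'b \<Rightarrow> 'b) \<Rightarrow> ('b \<Rightarrow> 'a \<Rightarrow> 'b) \<Rightarrow> ('a \<Rightarrow> 'b) \<Rightarrow> bool" where
  "linear_derivation sA sO lm rm d \<longleftrightarrow>
     (\<forall>f g. d (f + g) = d f + d g) \<and>
     (\<forall>c f. d (sA c f) = sO c (d f)) \<and>
     (\<forall>f g. d (f * g) = rm (d f) g + lm f (d g))"

text \<open>w alpha beta = omega(alpha, conj beta): linear in alpha, linear in conj beta
(i.e. antilinear in the representative beta), Hermitian, bimodule-compatible, positive.\<close>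
definition omega_cond ::
  "('a::ring_1 \<Rightarrow> 'a) \<Rightarrow> (complex \<Rightarrow> 'b::ab_group_add \<Rightarrow> 'b)
   \<Rightarrow> ('a \<Rightarrow> 'b \<Rightarrow> 'b) \<Rightarrow> ('b \<Rightarrow> 'a \<Rightarrow> 'b) \<Rightarrow> ('b \<Rightarrow> 'b \<Rightarrow> complex) \<Rightarrow> bool" where
  "omega_cond st sO lm rm w \<longleftrightarrow>
     (\<forall>a a' b. w (a + a') b = w a b + w a' b) \<and>
     (\<forall>c a b. w (sO c a) b = c * w a b) \<and>
     (\<forall>a b b'. w a (b + b') = w a b + w a b') \<and>
     (\<forall>c a b. w a (sO c b) = cnj c * w a b) \<and>
     (\<forall>a b. w a b = cnj (w b a)) \<and>
     (\<forall>f g a b. w (lm f (rm a g)) b = w a (lm (st f) (rm b (st g)))) \<and>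
     (\<forall>a. a \<noteq> 0 \<longrightarrow> Im (w a a) = 0 \<and> Re (w a a) > 0)"

definition eta_cond ::
  "(complex \<Rightarrow> 'a::ring_1 \<Rightarrow> 'a) \<Rightarrow> ('a \<Rightarrow> 'a) \<Rightarrow> ('a \<Rightarrow> 'b)
   \<Rightarrow> ('b \<Rightarrow> 'b \<Rightarrow> complex) \<Rightarrow> ('a \<Rightarrow> complex) \<Rightarrow> bool" where
  "eta_cond sA st d w \<eta> \<longleftrightarrow>
     (\<forall>f g. \<eta> (f + g) = \<eta> f + \<eta> g) \<and>
     (\<forall>c f. \<eta> (sA c f) = c * \<eta> f) \<and>
     (\<forall>f. \<eta> (st f) = - cnj (\<eta> f)) \<and>
     (\<forall>f g. \<eta> (f * g - g * f) =
        (-1 / (2 * \<i>)) * (w (d f) (d (st g)) - w (d g) (d (st f))))"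

text \<open>Operations on the conjugate space, in terms of representatives:
 f . conj(beta) = conj(beta f^*),  conj(beta) . g = conj(g^* beta),
 d^dagger f = conj(-d(f^*)).\<close>
definition lmc where "lmc st rm f b = rm b (st f)"
definition rmc where "rmc st lm b g = lm (st g) b"
definition ddag where "ddag st d f = - d (st f)"

text \<open>Elements of B = A + Omega^1 + conj(Omega^1) as triples (h, alpha, beta) meaning
(h, alpha, conj beta).  Left action:
 f(h,alpha,conj beta) = (f h, f alpha + df h, f conj(beta) + d^dagger f h).\<close>
definition lmB :: "('a::ring_1 \<Rightarrow> 'a) \<Rightarrow> ('a \<Rightarrow> 'b \<Rightarrow> 'b) \<Rightarrow> ('b::ab_group_add \<Rightarrow> 'a \<Rightarrow> 'b)
   \<Rightarrow> ('a \<Rightarrow> 'b) \<Rightarrow> 'a \<Rightarrow> 'a \<times> 'b \<times> 'b \<Rightarrow> 'a \<times> 'b \<times> 'b" where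
  "lmB st lm rm d f x = (case x of (h, a, b) \<Rightarrow>
     (f * h, lm f a + rm (d f) h, lmc st rm f b + rmc st lm (ddag st d f) h))"

text \<open>The trilinear form Xi, extended trilinearly from the pure-tensor formulas of
the context (unlisted type combinations give 0).\<close>
definition Xi ::
  "('a::ring_1 \<Rightarrow> 'a) \<Rightarrow> ('a \<Rightarrow> 'b \<Rightarrow> 'b) \<Rightarrow> ('b::ab_group_add \<Rightarrow> 'a \<Rightarrow> 'b)
   \<Rightarrow> ('a \<Rightarrow> 'b) \<Rightarrow> ('b \<Rightarrow> 'b \<Rightarrow> complex) \<Rightarrow> ('a \<Rightarrow> complex)
   \<Rightarrow> 'a \<times> 'b \<times> 'b \<Rightarrow> 'a \<times> 'b \<times> 'b \<Rightarrow> 'a \<times> 'b \<times> 'b \<Rightarrow> complex" where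
  "Xi st lm rm d w \<eta> x y z =
    (let x1 = fst x; x2 = fst (snd x); x3 = snd (snd x);
         y1 = fst y; y2 = fst (snd y); y3 = snd (snd y);
         z1 = fst z; z2 = fst (snd z); z3 = snd (snd z);
         XFFF = (\<lambda>fa fb fc. (1/3) * (- 2 * \<i> * \<eta> (fa * fb * fc)
                   - w (d fa) (rmc st lm (ddag st d fb) fc)
                   + w (rm (d fb) fc) (ddag st d fa)));
         XOFF = (\<lambda>a f g. w a (rmc st lm (ddag st d f) g));
         XCFF = (\<lambda>a f g. - w (rm (d f) g) a);
         XOCF = (\<lambda>a b f. - w a (rmc st lm b f));
         XCOF = (\<lambda>a b f. w (rm a f) b)
     in XFFF x1 y1 z1 + XFFF y1 z1 x1 + XFFF z1 x1 y1
      + XOFF x2 y1 z1 + XOFF y2 z1 x1 + XOFF z2 x1 y1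
      + XCFF x3 y1 z1 + XCFF y3 z1 x1 + XCFF z3 x1 y1
      + XOCF x2 y3 z1 + XOCF y2 z3 x1 + XOCF z2 x3 y1
      + XCOF y2 x3 z1 + XCOF z2 y3 x1 + XCOF x2 z3 y1)"

definition omega_symp :: "nat \<Rightarrow> ('b \<Rightarrow> 'b \<Rightarrow> complex) \<Rightarrow> (nat \<Rightarrow> nat \<Rightarrow> 'b) \<Rightarrow> (nat \<Rightarrow> nat \<Rightarrow> 'b) \<Rightarrow> real" where
  "omega_symp n w B C = Im (\<Sum>i<n. \<Sum>j<n. w (B i j) (C i j))"

end

theory Submission
  imports Defs
begin

(* Every entry N_kl = (delta_kl, A_kl, conj A_lk) has scalar part delta_kl in {0, 1}, which is
   central and killed by d and d^dagger, so Xi on such triples has a closed form.  Contracting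
   the last trace index, the Omega- and conj(Omega)-parts of u_ij N_jk cancel in pairs.  What
   remains is -2i eta(Trace u) + <A, du> - conj <A, du> + conj <A, [A, u]>, using u^* = -u,
   and u^* = -u also makes <A, [A, u]> purely imaginary. *)

definition mat_pairing ::
  "nat \<Rightarrow> ('b \<Rightarrow> 'b \<Rightarrow> complex) \<Rightarrow> (nat \<Rightarrow> nat \<Rightarrow> 'b) \<Rightarrow> (nat \<Rightarrow> nat \<Rightarrow> 'b) \<Rightarrow> complex"
  where "mat_pairing n w B C = (\<Sum>i<n. \<Sum>j<n. w (B i j) (C i j))"

definition mat_lmul :: "nat \<Rightarrow> ('a \<Rightarrow> 'b \<Rightarrow> 'b) \<Rightarrow> (nat \<Rightarrow> nat \<Rightarrow> 'a)
    \<Rightarrow> (nat \<Rightarrow> nat \<Rightarrow> 'b) \<Rightarrow> nat \<Rightarrow> nat \<Rightarrow> 'b::comm_monoid_add"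
  where "mat_lmul n lm u B i j = (\<Sum>k<n. lm (u i k) (B k j))"

definition mat_rmul :: "nat \<Rightarrow> ('b \<Rightarrow> 'a \<Rightarrow> 'b) \<Rightarrow> (nat \<Rightarrow> nat \<Rightarrow> 'b)
    \<Rightarrow> (nat \<Rightarrow> nat \<Rightarrow> 'a) \<Rightarrow> nat \<Rightarrow> nat \<Rightarrow> 'b::comm_monoid_add"
  where "mat_rmul n rm B u i j = (\<Sum>k<n. rm (B i k) (u k j))"

definition mat_adj :: "('a \<Rightarrow> 'a) \<Rightarrow> (nat \<Rightarrow> nat \<Rightarrow> 'a) \<Rightarrow> nat \<Rightarrow> nat \<Rightarrow> 'a"
  where "mat_adj st u i j = st (u j i)"

lemma omega_symp_eq_Im_mat_pairing: "omega_symp n w B C = Im (mat_pairing n w B C)"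
  by (simp add: omega_symp_def mat_pairing_def)

lemma sum_reverse3:
  "(\<Sum>i\<in>I. \<Sum>j\<in>J. \<Sum>l\<in>L. f i j l) = (\<Sum>l\<in>L. \<Sum>j\<in>J. \<Sum>i\<in>I. f i j l)"
proof -
  have "(\<Sum>i\<in>I. \<Sum>j\<in>J. \<Sum>l\<in>L. f i j l) = (\<Sum>i\<in>I. \<Sum>l\<in>L. \<Sum>j\<in>J. f i j l)"
    by (rule sum.cong[OF refl], rule sum.swap)
  also have "\<dots> = (\<Sum>l\<in>L. \<Sum>i\<in>I. \<Sum>j\<in>J. f i j l)"
    by (rule sum.swap)
  also have "\<dots> = (\<Sum>l\<in>L. \<Sum>j\<in>J. \<Sum>i\<in>I. f i j l)"
    by (rule sum.cong[OF refl], rule sum.swap)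
  finally show ?thesis .
qed

context
  fixes sA :: "complex \<Rightarrow> 'a::ring_1 \<Rightarrow> 'a" and st :: "'a \<Rightarrow> 'a"
    and sO :: "complex \<Rightarrow> 'b::ab_group_add \<Rightarrow> 'b"
    and lm :: "'a \<Rightarrow> 'b \<Rightarrow> 'b" and rm :: "'b \<Rightarrow> 'a \<Rightarrow> 'b"
    and d :: "'a \<Rightarrow> 'b" and w :: "'b \<Rightarrow> 'b \<Rightarrow> complex" and \<eta> :: "'a \<Rightarrow> complex"
  assumes A1: "star_algebra sA st"
    and A2: "bimodule sA sO lm rm"
    and A3: "linear_derivation sA sO lm rm d"
    and A4: "omega_cond st sO lm rm w"
    and A5: "eta_cond sA st d w \<eta>"
begin

lemma st_add: "st (x + y) = st x + st y" using A1 by (simp add: star_algebra_def)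
lemma st_mult: "st (x * y) = st y * st x" using A1 by (simp add: star_algebra_def)
lemma st_st: "st (st x) = x" using A1 by (simp add: star_algebra_def)
lemma st_0[simp]: "st 0 = 0" using st_add[of 0 0] by simp
lemma st_1[simp]: "st 1 = 1" using st_mult[of 1 "st 1"] by (simp add: st_st)

lemma lm_add1: "lm (f + g) a = lm f a + lm g a" using A2 by (simp add: bimodule_def)
lemma lm_add2: "lm f (a + b) = lm f a + lm f b" using A2 by (simp add: bimodule_def)
lemma rm_add1: "rm (a + b) f = rm a f + rm b f" using A2 by (simp add: bimodule_def)
lemma rm_add2: "rm a (f + g) = rm a f + rm a g" using A2 by (simp add: bimodule_def)
lemma lm_1[simp]: "lm 1 a = a" using A2 by (simp add: bimodule_def)
lemma rm_1[simp]: "rm a 1 = a" using A2 by (simp add: bimodule_def)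
lemma lm_0_left[simp]: "lm 0 a = 0" using lm_add1[of 0 0 a] by simp
lemma lm_0_right[simp]: "lm f 0 = 0" using lm_add2[of f 0 0] by simp
lemma rm_0_left[simp]: "rm 0 f = 0" using rm_add1[of 0 0 f] by simp
lemma rm_0_right[simp]: "rm a 0 = 0" using rm_add2[of a 0 0] by simp
lemma lm_neg: "lm (- f) a = - lm f a"
  using lm_add1[of f "-f" a] by (metis add.right_inverse lm_0_left minus_unique)
lemma rm_neg: "rm a (- f) = - rm a f"
  using rm_add2[of a f "-f"] by (metis add.right_inverse rm_0_right minus_unique)

lemma d_add: "d (f + g) = d f + d g" using A3 by (simp add: linear_derivation_def)
lemma d_mult: "d (f * g) = rm (d f) g + lm f (d g)" using A3 by (simp add: linear_derivation_def)
lemma d_0[simp]: "d 0 = 0" using d_add[of 0 0] by simp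
lemma d_1[simp]: "d 1 = 0" using d_mult[of 1 1] by simp
lemma d_neg: "d (- f) = - d f"
  using d_add[of f "-f"] by (metis add.right_inverse d_0 minus_unique)

lemma w_add1: "w (a + a') b = w a b + w a' b" using A4 unfolding omega_cond_def by blast
lemma w_add2: "w a (b + b') = w a b + w a b'" using A4 unfolding omega_cond_def by blast
lemma w_herm: "w a b = cnj (w b a)" using A4 unfolding omega_cond_def by blast
lemma w_compat: "w (lm f (rm a g)) b = w a (lm (st f) (rm b (st g)))"
  using A4 unfolding omega_cond_def by blast
lemma w_0_left[simp]: "w 0 b = 0" using w_add1[of 0 0 b] by simp
lemma w_0_right[simp]: "w a 0 = 0" using w_add2[of a 0 0] by simp
lemma w_rm: "w (rm a g) b = w a (rm b (st g))" using w_compat[of 1 a g b] by simp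
lemma w_lm: "w (lm f a) b = w a (lm (st f) b)" using w_compat[of f a 1 b] by simp
lemma w_neg1: "w (- a) b = - w a b"
  using w_add1[of a "-a" b] by (metis add.right_inverse w_0_left minus_unique)
lemma w_neg2: "w a (- b) = - w a b"
  using w_add2[of a b "-b"] by (metis add.right_inverse w_0_right minus_unique)
lemma w_diff1: "w (a - a') b = w a b - w a' b" using w_add1[of a "-a'" b] w_neg1 by simp
lemma w_diff2: "w a (b - b') = w a b - w a b'" using w_add2[of a b "-b'"] w_neg2 by simp
lemma w_sum1: "w (\<Sum>k\<in>S. f k) b = (\<Sum>k\<in>S. w (f k) b)"
  by (induction S rule: infinite_finite_induct) (auto simp: w_add1)
lemma w_sum2: "w a (\<Sum>k\<in>S. f k) = (\<Sum>k\<in>S. w a (f k))"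
  by (induction S rule: infinite_finite_induct) (auto simp: w_add2)

lemma eta_add: "\<eta> (f + g) = \<eta> f + \<eta> g" using A5 unfolding eta_cond_def by blast
lemma eta_0[simp]: "\<eta> 0 = 0" using eta_add[of 0 0] by simp
lemma eta_sum: "\<eta> (\<Sum>k\<in>S. f k) = (\<Sum>k\<in>S. \<eta> (f k))"
  by (induction S rule: infinite_finite_induct) (auto simp: eta_add)

lemma Xi_Kronecker:
  "Xi st lm rm d w \<eta> (h, a, b) (if p then 1 else 0, a', b') (if q then 1 else 0, a'', b'') =
     (if p then if q then - 2 * \<i> * \<eta> h else 0 else 0)
   + (if p then w a'' (ddag st d h) - w (d h) b'' - w a'' b + w a b'' else 0)
   + (if q then w a' b - w a b' else 0)
   + w (rm a'' h) b' - w (lm h a') b''"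
  by (cases p; cases q) (simp_all add: Xi_def Let_def lmc_def rmc_def ddag_def w_lm st_st)

lemma sum_Xi_Kronecker_last_index:
  fixes A :: "nat \<Rightarrow> nat \<Rightarrow> 'b"
  assumes "i < n" "k < n"
  shows "(\<Sum>l<n. Xi st lm rm d w \<eta> x
            (if k = l then 1 else 0, A k l, A l k) (if l = i then 1 else 0, A l i, A i l)) =
     (if k = i then - 2 * \<i> * \<eta> (fst x) else 0)
   + w (A k i) (ddag st d (fst x)) - w (d (fst x)) (A i k)
   + (\<Sum>l<n. w (rm (A l i) (fst x)) (A l k) - w (lm (fst x) (A k l)) (A i l))"
proof -
  obtain h a b where "x = (h, a, b)" by (cases x)
  then show ?thesis
    using assms by (simp add: Xi_Kronecker sum.distrib sum_subtractf)
qed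

lemma trace_Xi_expand:
  fixes A :: "nat \<Rightarrow> nat \<Rightarrow> 'b" and u :: "nat \<Rightarrow> nat \<Rightarrow> 'a"
  defines "N \<equiv> \<lambda>j k. (if j = k then (1::'a) else 0, A j k, A k j)"
  shows "(\<Sum>i<n. \<Sum>j<n. \<Sum>k<n. \<Sum>l<n.
            Xi st lm rm d w \<eta> (lmB st lm rm d (u i j) (N j k)) (N k l) (N l i))
    = - 2 * \<i> * \<eta> (\<Sum>i<n. u i i)
      + (\<Sum>i<n. \<Sum>j<n. w (A j i) (ddag st d (u i j)) - w (d (u i j)) (A i j))
      + (\<Sum>i<n. \<Sum>j<n. \<Sum>l<n. w (rm (A l i) (u i j)) (A l j) - w (lm (u i j) (A j l)) (A i l))"
proof -
  define G where "G i h k = (if k = i then - 2 * \<i> * \<eta> h else 0)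
      + w (A k i) (ddag st d h) - w (d h) (A i k)
      + (\<Sum>l<n. w (rm (A l i) h) (A l k) - w (lm h (A k l)) (A i l))" for i h k
  have sum_l: "(\<Sum>l<n. Xi st lm rm d w \<eta> (lmB st lm rm d (u i j) (N j k)) (N k l) (N l i))
      = G i (if j = k then u i j else 0) k" if "i < n" "k < n" for i j k
    using sum_Xi_Kronecker_last_index[OF that, of _ A] by (simp add: G_def N_def lmB_def)
  have "G i 0 k = 0" for i k
    by (simp add: G_def ddag_def)
  then have sum_k: "(\<Sum>k<n. G i (if j = k then u i j else 0) k) = G i (u i j) j" if "j < n" for i j
    using that by (simp add: if_distrib[of "\<lambda>h. G i h _"] cong: if_cong)
  have "(\<Sum>i<n. \<Sum>j<n. \<Sum>k<n. \<Sum>l<n.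
            Xi st lm rm d w \<eta> (lmB st lm rm d (u i j) (N j k)) (N k l) (N l i))
      = (\<Sum>i<n. \<Sum>j<n. G i (u i j) j)"
    by (simp add: sum_l sum_k)
  then show ?thesis
    by (simp add: G_def sum.distrib sum_subtractf eta_sum sum_distrib_left sum_negf)
qed

lemma mat_pairing_cnj: "cnj (mat_pairing n w B C) = mat_pairing n w C B"
  unfolding mat_pairing_def cnj_sum by (intro sum.cong refl) (rule w_herm[symmetric])

lemma mat_pairing_diff1:
  "mat_pairing n w (\<lambda>i j. B i j - B' i j) C = mat_pairing n w B C - mat_pairing n w B' C"
  by (simp add: mat_pairing_def w_diff1 sum_subtractf)

lemma mat_pairing_diff2:
  "mat_pairing n w B (\<lambda>i j. C i j - C' i j) = mat_pairing n w B C - mat_pairing n w B C'"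
  by (simp add: mat_pairing_def w_diff2 sum_subtractf)

lemma mat_pairing_rmul_adj:
  "mat_pairing n w (mat_rmul n rm B u) C = mat_pairing n w B (mat_rmul n rm C (mat_adj st u))"
  unfolding mat_pairing_def mat_rmul_def mat_adj_def w_sum1 w_sum2 w_rm
  by (rule sum.cong[OF refl], rule sum.swap)

lemma mat_pairing_lmul_adj:
  "mat_pairing n w (mat_lmul n lm u B) C = mat_pairing n w B (mat_lmul n lm (mat_adj st u) C)"
  unfolding mat_pairing_def mat_lmul_def mat_adj_def w_sum1 w_sum2 w_lm
  by (rule sum_reverse3)

lemma mat_pairing_commutator_skew:
  fixes A :: "nat \<Rightarrow> nat \<Rightarrow> 'b"
  assumes skew: "\<forall>i<n. \<forall>j<n. st (u i j) = - u j i"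
  defines "C \<equiv> \<lambda>i j. mat_rmul n rm A u i j - mat_lmul n lm u A i j"
  shows "mat_pairing n w C A = - mat_pairing n w A C"
proof -
  have "mat_pairing n w A (mat_rmul n rm A (mat_adj st u)) = - mat_pairing n w A (mat_rmul n rm A u)"
    and "mat_pairing n w A (mat_lmul n lm (mat_adj st u) A) = - mat_pairing n w A (mat_lmul n lm u A)"
    using skew by (auto simp: mat_pairing_def mat_rmul_def mat_lmul_def mat_adj_def w_sum2
        rm_neg lm_neg w_neg2 sum_negf intro!: sum.cong)
  then show ?thesis
    by (simp add: C_def mat_pairing_diff1 mat_pairing_diff2 mat_pairing_rmul_adj mat_pairing_lmul_adj)
qed

lemma trace_commutator_term:
  fixes A :: "nat \<Rightarrow> nat \<Rightarrow> 'b"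
  shows "(\<Sum>i<n. \<Sum>j<n. \<Sum>l<n. w (rm (A l i) (u i j)) (A l j) - w (lm (u i j) (A j l)) (A i l))
    = mat_pairing n w (\<lambda>i j. mat_rmul n rm A u i j - mat_lmul n lm u A i j) A"
proof -
  have "(\<Sum>i<n. \<Sum>j<n. \<Sum>l<n. w (rm (A l i) (u i j)) (A l j)) = mat_pairing n w (mat_rmul n rm A u) A"
    unfolding mat_pairing_def mat_rmul_def w_sum1 by (rule sum_reverse3)
  moreover have "(\<Sum>i<n. \<Sum>j<n. \<Sum>l<n. w (lm (u i j) (A j l)) (A i l)) = mat_pairing n w (mat_lmul n lm u A) A"
    unfolding mat_pairing_def mat_lmul_def w_sum1 by (rule sum.cong[OF refl], rule sum.swap)
  ultimately show ?thesis
    by (simp add: mat_pairing_diff1 sum_subtractf)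
qed

lemma trace_derivative_term_skew:
  fixes A :: "nat \<Rightarrow> nat \<Rightarrow> 'b"
  assumes skew: "\<forall>i<n. \<forall>j<n. st (u i j) = - u j i"
  shows "(\<Sum>i<n. \<Sum>j<n. w (A j i) (ddag st d (u i j)) - w (d (u i j)) (A i j))
    = mat_pairing n w A (\<lambda>i j. d (u i j)) - mat_pairing n w (\<lambda>i j. d (u i j)) A"
proof -
  have "(\<Sum>i<n. \<Sum>j<n. w (A j i) (ddag st d (u i j))) = (\<Sum>i<n. \<Sum>j<n. w (A j i) (d (u j i)))"
    using skew by (intro sum.cong refl) (simp add: ddag_def d_neg)
  also have "\<dots> = mat_pairing n w A (\<lambda>i j. d (u i j))"
    unfolding mat_pairing_def by (rule sum.swap)
  finally show ?thesis
    by (simp add: mat_pairing_def sum_subtractf)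
qed

lemma trace_Xi_moment_map:
  fixes A :: "nat \<Rightarrow> nat \<Rightarrow> 'b" and u :: "nat \<Rightarrow> nat \<Rightarrow> 'a"
  assumes skew: "\<forall>i<n. \<forall>j<n. st (u i j) = - u j i"
  defines "N \<equiv> \<lambda>j k. (if j = k then (1::'a) else 0, A j k, A k j)"
  shows "(\<i> / 2) * (\<Sum>i<n. \<Sum>j<n. \<Sum>k<n. \<Sum>l<n.
            Xi st lm rm d w \<eta> (lmB st lm rm d (u i j) (N j k)) (N k l) (N l i))
        = \<eta> (\<Sum>i<n. u i i)
          - complex_of_real (omega_symp n w A (\<lambda>i j. d (u i j)))
          + complex_of_real
              (omega_symp n w A (\<lambda>i j. \<Sum>k<n. rm (A i k) (u k j) - lm (u i k) (A k j)) / 2)"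
proof -
  define C where "C = (\<lambda>i j. mat_rmul n rm A u i j - mat_lmul n lm u A i j)"
  define S where "S = mat_pairing n w A (\<lambda>i j. d (u i j))"
  define Z where "Z = mat_pairing n w A C"
  have C_eq: "(\<lambda>i j. \<Sum>k<n. rm (A i k) (u k j) - lm (u i k) (A k j)) = C"
    by (simp add: C_def mat_rmul_def mat_lmul_def sum_subtractf)
  have trace: "(\<Sum>i<n. \<Sum>j<n. \<Sum>k<n. \<Sum>l<n.
            Xi st lm rm d w \<eta> (lmB st lm rm d (u i j) (N j k)) (N k l) (N l i))
      = - 2 * \<i> * \<eta> (\<Sum>i<n. u i i) + (S - cnj S) + cnj Z"
    unfolding N_def trace_Xi_expand trace_derivative_term_skew[OF skew] trace_commutator_term
      S_def Z_def C_def mat_pairing_cnj ..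
  have "cnj Z = - Z"
    using mat_pairing_commutator_skew[OF skew] unfolding Z_def C_def mat_pairing_cnj .
  from arg_cong[where f = Re, OF this] have "Re Z = 0"
    by simp
  then show ?thesis
    unfolding trace C_eq omega_symp_eq_Im_mat_pairing S_def[symmetric] Z_def[symmetric]
    by (simp add: complex_eq_iff algebra_simps) (simp add: field_simps)
qed

end

theorem mainTheorem4:
  fixes sA :: "complex \<Rightarrow> 'a::ring_1 \<Rightarrow> 'a" and st :: "'a \<Rightarrow> 'a"
    and sO :: "complex \<Rightarrow> 'b::ab_group_add \<Rightarrow> 'b"
    and lm :: "'a \<Rightarrow> 'b \<Rightarrow> 'b" and rm :: "'b \<Rightarrow> 'a \<Rightarrow> 'b"
    and d :: "'a \<Rightarrow> 'b" and w :: "'b \<Rightarrow> 'b \<Rightarrow> complex" and \<eta> :: "'a \<Rightarrow> complex"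
    and n :: nat and P u :: "nat \<Rightarrow> nat \<Rightarrow> 'a" and \<delta> :: "nat \<Rightarrow> nat \<Rightarrow> 'b"
  assumes A1: "star_algebra sA st"
    and A2: "bimodule sA sO lm rm"
    and A3: "linear_derivation sA sO lm rm d"
    and A4: "omega_cond st sO lm rm w"
    and A5: "eta_cond sA st d w \<eta>"
    and P_idem: "\<forall>i<n. \<forall>j<n. (\<Sum>k<n. P i k * P k j) = P i j"
    and P_herm: "\<forall>i<n. \<forall>j<n. st (P i j) = P j i"
    and delta_P: "\<forall>i<n. \<forall>j<n. \<delta> i j = (\<Sum>k<n. \<Sum>l<n. lm (P i k) (rm (\<delta> k l) (P l j)))"
    and u_P: "\<forall>i<n. \<forall>j<n. u i j = (\<Sum>k<n. \<Sum>l<n. P i k * u k l * P l j)"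
    and u_skew: "\<forall>i<n. \<forall>j<n. st (u i j) = - u j i"
  shows
    "let A = (\<lambda>i j. (\<Sum>k<n. lm (2 * P i k - (if i = k then 1 else 0)) (d (P k j))) + \<delta> i j);
         N = (\<lambda>j k. (if j = k then (1::'a) else 0, A j k, A k j));
         comm = (\<lambda>i j. \<Sum>k<n. rm (A i k) (u k j) - lm (u i k) (A k j))
     in (\<i> / 2) * (\<Sum>i<n. \<Sum>j<n. \<Sum>k<n. \<Sum>l<n.
            Xi st lm rm d w \<eta> (lmB st lm rm d (u i j) (N j k)) (N k l) (N l i))
        = \<eta> (\<Sum>i<n. u i i)
          - complex_of_real (omega_symp n w A (\<lambda>i j. d (u i j)))
          + complex_of_real (omega_symp n w A comm / 2)"
  unfolding Let_def by (rule trace_Xi_moment_map[OF A1 A2 A3 A4 A5 u_skew])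

end
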